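(* Under the hypotheses of the preceding lemma ($\tau\in(3,5)$, $w_i=c_w(N/i)^{1/(\tau-1)}$, $\beta=\beta_{c,N}$, $\lambda=(\tau-2)/(\tau-1)$), for every $r\in\mathbb R$, \[ \lim_{N\to\infty}\int_{-\infty}^\infty e^{-NG_N(z/N^{1/(\tau-1)};r)}\,dz=\int_{-\infty}^\infty\exp\Big(zr\sqrt{\frac{\mathbb E[W]}{\nu}}-f\Big(\sqrt{\frac{\mathbb E[W]}{\nu}}z\Big)\Big)dz, \] with $f(x)=\sum_{i\ge1}\Big(\frac12\big(\frac{\tau-2}{\tau-1}x\,i^{-1/(\tau-1)}\big)^2-\log\cosh\big(\frac{\tau-2}{\tau-1}x\,i^{-1/(\tau-1)}\big)\Big)$.
   Context: $W_N=w_{U_N}$ with $U_N$ uniform on $[N]$; $W$ is the distributional limit of $W_N$, with $\mathbb P(W>w)=(w/c_w)^{-(\tau-1)}$ for $w\ge c_w$, $\mathbb E[W]=c_w\frac{\tau-1}{\tau-2}$. $\nu=\mathbb E[W^2]/\mathbb E[W]$, $\nu_N=\mathbb E[W_N^2]/\mathbb E[W_N]$, $\beta_{c,N}={\rm asinh}(1/\nu_N)$, $\alpha_N(\beta)=\sqrt{\sinh(\beta)/\mathbb E[W_N]}$, $G_N(z;r)=\frac12z^2-\frac1N\sum_{i\in[N]}\log\cosh\big(\alpha_N(\beta)w_iz+r/N^\lambda\big)$. *)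

theory Defs
  imports "HOL-Analysis.Analysis"
begin

definition wt :: "real \<Rightarrow> real \<Rightarrow> nat \<Rightarrow> nat \<Rightarrow> real" where
  "wt tau cw N i = cw * (real N / real i) powr (1 / (tau - 1))"

text \<open>E[W_N] and E[W_N^2] for W_N = w_{U_N}, U_N uniform on {1..N}.\<close>
definition EWN :: "real \<Rightarrow> real \<Rightarrow> nat \<Rightarrow> real" where
  "EWN tau cw N = (\<Sum>i\<in>{1..N}. wt tau cw N i) / real N"

definition EW2N :: "real \<Rightarrow> real \<Rightarrow> nat \<Rightarrow> real" where
  "EW2N tau cw N = (\<Sum>i\<in>{1..N}. (wt tau cw N i)^2) / real N"

definition nuN :: "real \<Rightarrow> real \<Rightarrow> nat \<Rightarrow> real" where
  "nuN tau cw N = EW2N tau cw N / EWN tau cw N"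

definition betacN :: "real \<Rightarrow> real \<Rightarrow> nat \<Rightarrow> real" where
  "betacN tau cw N = arsinh (1 / nuN tau cw N)"

definition alphaN :: "real \<Rightarrow> real \<Rightarrow> nat \<Rightarrow> real \<Rightarrow> real" where
  "alphaN tau cw N beta = sqrt (sinh beta / EWN tau cw N)"

definition GN :: "real \<Rightarrow> real \<Rightarrow> nat \<Rightarrow> real \<Rightarrow> real \<Rightarrow> real \<Rightarrow> real \<Rightarrow> real" where
  "GN tau cw N beta lambda z r =
     z^2 / 2 - (\<Sum>i\<in>{1..N}. ln (cosh (alphaN tau cw N beta * wt tau cw N i * z
                                        + r / real N powr lambda))) / real N"

text \<open>Limiting Pareto variable W: P(W > w) = (w/c_w)^(-(tau-1)), w >= c_w.\<close>
definition EW :: "real \<Rightarrow> real \<Rightarrow> real" where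
  "EW tau cw = cw * (tau - 1) / (tau - 2)"

definition EW2 :: "real \<Rightarrow> real \<Rightarrow> real" where
  "EW2 tau cw = cw^2 * (tau - 1) / (tau - 3)"

definition nu :: "real \<Rightarrow> real \<Rightarrow> real" where
  "nu tau cw = EW2 tau cw / EW tau cw"

definition flim :: "real \<Rightarrow> real \<Rightarrow> real" where
  "flim tau x = (\<Sum>i. let y = (tau - 2) / (tau - 1) * x * real (Suc i) powr (- 1 / (tau - 1))
                      in y^2 / 2 - ln (cosh y))"

end

theory Submission
  imports Defs "HOL-Real_Asymp.Real_Asymp" "HOL-Probability.Probability"
begin

text \<open>
  Put \<open>p = 1/(\<tau> - 1) \<in> (1/4, 1/2)\<close>, so that \<open>w\<^sub>i \<sim> i\<^sup>-\<^sup>p\<close>. After rescaling, the exponent of the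
  integrand is \<open>\<Sum>\<^sub>i ln cosh (a\<^sub>i + s) - a\<^sub>i\<^sup>2/2\<close> with \<open>a\<^sub>i = \<kappa>\<^sub>N z i\<^sup>-\<^sup>p\<close>, \<open>s = r N\<^sup>p\<^sup>-\<^sup>1\<close> and
  \<open>\<kappa>\<^sub>N \<rightarrow> \<surd>(1 - 2p)\<close>. Expanding \<open>ln cosh\<close> at \<open>a\<^sub>i\<close> splits it into \<open>-\<Sum>\<^sub>i g(a\<^sub>i)\<close> with
  \<open>g(y) = y\<^sup>2/2 - ln cosh y\<close>, Taylor remainders of total size at most \<open>N s\<^sup>2/2 \<rightarrow> 0\<close>, and
  \<open>s \<Sum>\<^sub>i tanh a\<^sub>i\<close>, which differs from \<open>s \<Sum>\<^sub>i a\<^sub>i \<rightarrow> r z \<surd>(1 - 2p)/(1 - p)\<close> by at most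
  \<open>s \<Sum>\<^sub>i a\<^sub>i\<^sup>2 \<rightarrow> 0\<close>. As \<open>g(y) \<le> y\<^sup>4/12\<close> and \<open>4p > 1\<close>, Tannery's theorem gives
  \<open>\<Sum>\<^sub>i g(a\<^sub>i) \<rightarrow> \<Sum>\<^sub>k g(\<surd>(1 - 2p) z k\<^sup>-\<^sup>p)\<close>. Keeping only the first term of \<open>\<Sum>\<^sub>i g(a\<^sub>i)\<close>
  bounds the exponent by \<open>-g(\<surd>(1 - 2p) z) + O(1 + |z|)\<close>, a Gaussian bound uniform in \<open>N\<close>, so
  dominated convergence applies.
\<close>

lemma DERIV_nonneg_imp_le:
  fixes f f' :: "real \<Rightarrow> real"
  assumes "a \<le> b"
    and "\<And>x. a \<le> x \<Longrightarrow> x \<le> b \<Longrightarrow> (f has_real_derivative f' x) (at x)"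
    and "\<And>x. a \<le> x \<Longrightarrow> x \<le> b \<Longrightarrow> 0 \<le> f' x"
  shows "f a \<le> f b"
  using DERIV_nonneg_imp_nondecreasing[of a b f] assms by blast

lemma tanh_diff_le:
  fixes x y :: real
  assumes "x \<le> y"
  shows "tanh y - tanh x \<le> y - x"
proof -
  have "(\<lambda>t. t - tanh t) x \<le> (\<lambda>t. t - tanh t) y"
    by (rule DERIV_nonneg_imp_le[where f = "\<lambda>t. t - tanh t" and f' = "\<lambda>t. tanh t ^ 2"])
       (use assms in \<open>auto intro!: derivative_eq_intros\<close>)
  then show ?thesis by simp
qed

lemma tanh_le_self: "0 \<le> (x::real) \<Longrightarrow> tanh x \<le> x"
  using tanh_diff_le[of 0 x] by simp

lemma abs_tanh_le_abs: "\<bar>tanh (x::real)\<bar> \<le> \<bar>x\<bar>"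
  using tanh_le_self[of "\<bar>x\<bar>"] by simp

lemma tanh_ge_cubic:
  fixes x :: real
  assumes "0 \<le> x"
  shows "x - x^3/3 \<le> tanh x"
proof -
  have "(\<lambda>t. tanh t - t + t^3/3) 0 \<le> (\<lambda>t. tanh t - t + t^3/3) x"
  proof (rule DERIV_nonneg_imp_le[where f = "\<lambda>t. tanh t - t + t^3/3" and f' = "\<lambda>t. t^2 - tanh t ^ 2"])
    fix t :: real
    assume "0 \<le> t" "t \<le> x"
    then have "tanh t ^ 2 \<le> t^2"
      using tanh_le_self[of t] by (intro power_mono) auto
    then show "0 \<le> t^2 - tanh t ^ 2" by simp
  qed (use assms in \<open>auto intro!: derivative_eq_intros\<close>)
  then show ?thesis by simp
qed

lemma abs_self_minus_tanh_le: "\<bar>x - tanh (x::real)\<bar> \<le> x^2"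
proof -
  have "y - tanh y \<le> y^2" if "0 \<le> y" for y :: real
  proof (cases "y \<le> 1")
    case True
    have "y^3 \<le> y^2"
      using True that by (simp add: power3_eq_cube power2_eq_square mult_left_le)
    moreover have "0 \<le> y^3" using that by simp
    ultimately show ?thesis using tanh_ge_cubic[OF that] by linarith
  next
    case False
    then have "y \<le> y^2" by (simp add: power2_eq_square)
    moreover have "0 \<le> tanh y" using that by simp
    ultimately show ?thesis by linarith
  qed
  moreover have "0 \<le> y - tanh y" if "0 \<le> y" for y :: real
    using tanh_le_self[OF that] by simp
  ultimately have "\<bar>y - tanh y\<bar> \<le> y^2" if "0 \<le> y" for y :: real
    using that by simp
  from this[of "\<bar>x\<bar>"] show ?thesis
    by (cases "0 \<le> x") (simp_all add: abs_minus_commute)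
qed

text \<open>Since \<open>(ln \<circ> cosh)'' = 1 - tanh\<^sup>2 \<in> [0, 1]\<close>, this Taylor remainder lies in \<open>[0, s\<^sup>2/2]\<close>.\<close>
definition lncosh_remainder :: "real \<Rightarrow> real \<Rightarrow> real" where
  "lncosh_remainder a s = ln (cosh (a + s)) - ln (cosh a) - s * tanh a"

lemma lncosh_remainder_bounds: "0 \<le> lncosh_remainder a s" "lncosh_remainder a s \<le> s^2/2"
proof -
  define h where "h t = lncosh_remainder a t" for t
  have dh: "(h has_real_derivative tanh (a + t) - tanh a) (at t)" for t
    unfolding h_def[abs_def] lncosh_remainder_def
    by (auto intro!: derivative_eq_intros simp: tanh_def)
  have h0: "h 0 = 0" by (simp add: h_def lncosh_remainder_def)
  show "0 \<le> lncosh_remainder a s"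
  proof (cases "0 \<le> s")
    case True
    have "h 0 \<le> h s"
      by (rule DERIV_nonneg_imp_le[OF True dh]) simp
    then show ?thesis using h0 by (simp add: h_def)
  next
    case False
    have "(\<lambda>t. - h t) s \<le> (\<lambda>t. - h t) 0"
      by (rule DERIV_nonneg_imp_le[where f = "\<lambda>t. - h t" and f' = "\<lambda>t. tanh a - tanh (a + t)"])
         (use False in \<open>auto intro!: derivative_eq_intros dh\<close>)
    then show ?thesis using h0 by (simp add: h_def)
  qed
  show "lncosh_remainder a s \<le> s^2/2"
  proof (cases "0 \<le> s")
    case True
    have "(\<lambda>t. t^2/2 - h t) 0 \<le> (\<lambda>t. t^2/2 - h t) s"
    proof (rule DERIV_nonneg_imp_le[where f = "\<lambda>t. t^2/2 - h t" and f' = "\<lambda>t. t - (tanh (a + t) - tanh a)"])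
      fix t :: real
      assume "0 \<le> t"
      then show "0 \<le> t - (tanh (a + t) - tanh a)" using tanh_diff_le[of a "a + t"] by simp
    qed (use True in \<open>auto intro!: derivative_eq_intros dh\<close>)
    then show ?thesis using h0 by (simp add: h_def)
  next
    case False
    have "(\<lambda>t. h t - t^2/2) s \<le> (\<lambda>t. h t - t^2/2) 0"
    proof (rule DERIV_nonneg_imp_le[where f = "\<lambda>t. h t - t^2/2" and f' = "\<lambda>t. tanh (a + t) - tanh a - t"])
      fix t :: real
      assume "t \<le> 0"
      then show "0 \<le> tanh (a + t) - tanh a - t" using tanh_diff_le[of "a + t" a] by simp
    qed (use False in \<open>auto intro!: derivative_eq_intros dh\<close>)
    then show ?thesis using h0 by (simp add: h_def)
  qed
qed

definition cosh_gap :: "real \<Rightarrow> real" where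
  "cosh_gap y = y^2/2 - ln (cosh y)"

lemma cosh_gap_minus [simp]: "cosh_gap (- y) = cosh_gap y"
  by (simp add: cosh_gap_def)

lemma cosh_gap_abs [simp]: "cosh_gap \<bar>y\<bar> = cosh_gap y"
  by (cases "0 \<le> y") auto

lemma cosh_gap_nonneg: "0 \<le> cosh_gap y"
  using lncosh_remainder_bounds(2)[of 0 y] by (simp add: cosh_gap_def lncosh_remainder_def)

lemma has_real_derivative_cosh_gap: "(cosh_gap has_real_derivative y - tanh y) (at y)"
  unfolding cosh_gap_def[abs_def]
  by (auto intro!: derivative_eq_intros simp: tanh_def)

lemma cosh_gap_le_quartic: "cosh_gap y \<le> y^4/12"
proof -
  have "cosh_gap y \<le> y^4/12" if "0 \<le> y" for y
  proof -
    have "(\<lambda>t. t^4/12 - cosh_gap t) 0 \<le> (\<lambda>t. t^4/12 - cosh_gap t) y"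
    proof (rule DERIV_nonneg_imp_le[where f = "\<lambda>t. t^4/12 - cosh_gap t" and f' = "\<lambda>t. t^3/3 - (t - tanh t)"])
      fix t :: real
      assume "0 \<le> t"
      then show "0 \<le> t^3/3 - (t - tanh t)" using tanh_ge_cubic[of t] by simp
    qed (use that in \<open>auto intro!: derivative_eq_intros has_real_derivative_cosh_gap\<close>)
    then show ?thesis by (simp add: cosh_gap_def)
  qed
  from this[of "\<bar>y\<bar>"] show ?thesis by simp
qed

lemma cosh_gap_mono:
  assumes "\<bar>x\<bar> \<le> \<bar>y\<bar>"
  shows "cosh_gap x \<le> cosh_gap y"
proof -
  have "cosh_gap \<bar>x\<bar> \<le> cosh_gap \<bar>y\<bar>"
    by (rule DERIV_nonneg_imp_le[OF assms has_real_derivative_cosh_gap])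
       (use tanh_le_self in \<open>auto simp del: tanh_real_abs\<close>)
  then show ?thesis by simp
qed

lemma cosh_gap_ge: "y^2/2 - \<bar>y\<bar> \<le> cosh_gap y"
proof -
  have "cosh y \<le> exp \<bar>y\<bar>"
    unfolding cosh_def by (cases "0 \<le> y") auto
  then have "ln (cosh y) \<le> \<bar>y\<bar>"
    using ln_le_cancel_iff[of "cosh y" "exp \<bar>y\<bar>"] by simp
  then show ?thesis by (simp add: cosh_gap_def)
qed

lemma isCont_cosh_gap: "isCont cosh_gap y"
  unfolding cosh_gap_def by (intro continuous_intros) auto

definition zeta_partial :: "real \<Rightarrow> nat \<Rightarrow> real" where
  "zeta_partial q n = (\<Sum>i\<in>{1..n}. real i powr (- q))"

lemma zeta_partial_Suc: "zeta_partial q (Suc n) = zeta_partial q n + real (Suc n) powr (- q)"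
  by (simp add: zeta_partial_def)

lemma zeta_partial_pos: "1 \<le> n \<Longrightarrow> 0 < zeta_partial q n"
  unfolding zeta_partial_def by (intro sum_pos) auto

lemma powr_le_tangent:
  fixes q x y :: real
  assumes q: "0 < q" "q < 1" and "0 < x" "0 < y"
  shows "y powr (1 - q) \<le> x powr (1 - q) + (1 - q) * x powr (- q) * (y - x)"
proof -
  have young: "y powr (1 - q) * x powr q \<le> (1 - q) * y + q * x"
    using Youngs_inequality_0[of "1 - q" q y x] assms by simp
  have "y powr (1 - q) = y powr (1 - q) * x powr q * x powr (- q)"
    using \<open>0 < x\<close> by (simp add: mult.assoc powr_add[symmetric])
  also have "\<dots> \<le> ((1 - q) * y + q * x) * x powr (- q)"
    by (rule mult_right_mono[OF young]) simp
  also have "\<dots> = x powr (1 - q) + (1 - q) * x powr (- q) * (y - x)"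
    using \<open>0 < x\<close> by (simp add: powr_diff powr_minus field_simps)
  finally show ?thesis .
qed

lemma zeta_partial_le:
  assumes q: "0 < q" "q < 1"
  shows "zeta_partial q n \<le> real n powr (1 - q) / (1 - q)"
proof (induction n)
  case 0
  then show ?case by (simp add: zeta_partial_def)
next
  case (Suc n)
  show ?case
  proof (cases "n = 0")
    case True
    then show ?thesis using q by (simp add: zeta_partial_def)
  next
    case False
    then have "real n powr (1 - q)
        \<le> real (Suc n) powr (1 - q) - (1 - q) * real (Suc n) powr (- q)"
      using powr_le_tangent[OF q, of "real (Suc n)" "real n"] by simp
    with Suc.IH q show ?thesis
      by (simp add: zeta_partial_Suc field_simps)
  qed
qed

lemma zeta_partial_ge:
  assumes q: "0 < q" "q < 1"
  shows "((real n + 1) powr (1 - q) - 1) / (1 - q) \<le> zeta_partial q n"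
proof (induction n)
  case 0
  then show ?case by (simp add: zeta_partial_def)
next
  case (Suc n)
  have "(real n + 2) powr (1 - q) \<le> (real n + 1) powr (1 - q) + (1 - q) * (real n + 1) powr (- q)"
    using powr_le_tangent[OF q, of "real n + 1" "real n + 2"] by simp
  with Suc.IH q show ?case
    by (simp add: zeta_partial_Suc add.commute field_simps)
qed

lemma zeta_partial_ge_n_times_last:
  assumes "0 \<le> q" "1 \<le> n"
  shows "real n powr (1 - q) \<le> zeta_partial q n"
proof -
  have "real n powr (1 - q) = (\<Sum>i\<in>{1..n}. real n powr (- q))"
    using assms by (simp add: powr_diff powr_minus field_simps)
  also have "\<dots> \<le> zeta_partial q n"
    unfolding zeta_partial_def by (intro sum_mono powr_mono2') (use assms in auto)
  finally show ?thesis .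
qed

lemma zeta_partial_asymp:
  assumes q: "0 < q" "q < 1"
  shows "(\<lambda>n. real n powr (q - 1) * zeta_partial q n) \<longlonglongrightarrow> 1 / (1 - q)"
proof (rule tendsto_sandwich)
  show "\<forall>\<^sub>F n in sequentially.
      real n powr (q - 1) * (((real n + 1) powr (1 - q) - 1) / (1 - q))
        \<le> real n powr (q - 1) * zeta_partial q n"
    by (intro always_eventually allI mult_left_mono zeta_partial_ge q) simp
  show "\<forall>\<^sub>F n in sequentially. real n powr (q - 1) * zeta_partial q n \<le> 1 / (1 - q)"
  proof (rule eventually_sequentiallyI)
    fix n :: nat
    assume "1 \<le> n"
    then have "real n powr (q - 1) * real n powr (1 - q) = 1"
      by (simp add: powr_add[symmetric])
    then show "real n powr (q - 1) * zeta_partial q n \<le> 1 / (1 - q)"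
      using mult_left_mono[OF zeta_partial_le[OF q, of n], of "real n powr (q - 1)"] by simp
  qed
  show "(\<lambda>n. real n powr (q - 1) * (((real n + 1) powr (1 - q) - 1) / (1 - q))) \<longlonglongrightarrow> 1 / (1 - q)"
    using q by (real_asymp simp: inverse_eq_divide)
qed simp

text \<open>
  With \<open>p = 1/(\<tau> - 1)\<close> and \<open>\<beta> = \<beta>\<^sub>c\<^sub>,\<^sub>N\<close> one has \<open>\<alpha>\<^sub>N w\<^sub>i z / N\<^sup>p = vertex_field p N z i\<close> and
  \<open>-N G\<^sub>N(z/N\<^sup>p; r) = energy p r N z\<close>; the constant \<open>c\<^sub>w\<close> drops out because \<open>\<alpha>\<^sub>N = 1/\<surd>E[W\<^sub>N\<^sup>2]\<close>.
\<close>
definition kappa :: "real \<Rightarrow> nat \<Rightarrow> real" where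
  "kappa p N = sqrt (real N powr (1 - 2 * p) / zeta_partial (2 * p) N)"

definition vertex_field :: "real \<Rightarrow> nat \<Rightarrow> real \<Rightarrow> nat \<Rightarrow> real" where
  "vertex_field p N z i = kappa p N * z * real i powr (- p)"

definition energy :: "real \<Rightarrow> real \<Rightarrow> nat \<Rightarrow> real \<Rightarrow> real" where
  "energy p r N z = (\<Sum>i\<in>{1..N}. ln (cosh (vertex_field p N z i + r / real N powr (1 - p)))
                                   - (vertex_field p N z i)^2 / 2)"

definition energy_lim :: "real \<Rightarrow> real \<Rightarrow> real \<Rightarrow> real" where
  "energy_lim p r z = r * z * sqrt (1 - 2 * p) / (1 - p)
                      - (\<Sum>k. cosh_gap (sqrt (1 - 2 * p) * z * real (Suc k) powr (- p)))"

lemma kappa_nonneg: "0 \<le> kappa p N"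
  unfolding kappa_def zeta_partial_def by (intro real_sqrt_ge_zero divide_nonneg_nonneg sum_nonneg) auto

lemma kappa_sq: "1 \<le> N \<Longrightarrow> kappa p N ^ 2 * zeta_partial (2 * p) N = real N powr (1 - 2 * p)"
  unfolding kappa_def using zeta_partial_pos[of N "2 * p"] by simp

lemma kappa_bounds:
  assumes p: "0 < p" "p < 1/2" and N: "1 \<le> N"
  shows "sqrt (1 - 2 * p) \<le> kappa p N" "kappa p N \<le> 1"
proof -
  have q: "0 < 2 * p" "2 * p < 1" using p by auto
  have H: "0 < zeta_partial (2 * p) N" using zeta_partial_pos[OF N] .
  have "1 - 2 * p \<le> real N powr (1 - 2 * p) / zeta_partial (2 * p) N"
    using zeta_partial_le[OF q, of N] H q by (simp add: field_simps)
  then show "sqrt (1 - 2 * p) \<le> kappa p N" unfolding kappa_def by (rule real_sqrt_le_mono)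
  have "real N powr (1 - 2 * p) / zeta_partial (2 * p) N \<le> 1"
    using zeta_partial_ge_n_times_last[of "2 * p" N] N p H by simp
  then show "kappa p N \<le> 1" unfolding kappa_def by simp
qed

lemma kappa_tendsto:
  assumes p: "0 < p" "p < 1/2"
  shows "kappa p \<longlonglongrightarrow> sqrt (1 - 2 * p)"
proof -
  have q: "0 < 2 * p" "2 * p < 1" using p by auto
  have "(\<lambda>N. inverse (real N powr (2 * p - 1) * zeta_partial (2 * p) N)) \<longlonglongrightarrow> inverse (1 / (1 - 2 * p))"
    using zeta_partial_asymp[OF q] q by (intro tendsto_inverse) auto
  moreover have "\<forall>\<^sub>F N in sequentially. inverse (real N powr (2 * p - 1) * zeta_partial (2 * p) N)
      = real N powr (1 - 2 * p) / zeta_partial (2 * p) N"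
  proof (rule eventually_sequentiallyI)
    fix N :: nat
    assume "1 \<le> N"
    then have "real N powr (2 * p - 1) = inverse (real N powr (1 - 2 * p))"
      by (simp add: powr_minus[symmetric])
    then show "inverse (real N powr (2 * p - 1) * zeta_partial (2 * p) N)
        = real N powr (1 - 2 * p) / zeta_partial (2 * p) N"
      by (simp add: divide_inverse mult.commute)
  qed
  ultimately have "(\<lambda>N. real N powr (1 - 2 * p) / zeta_partial (2 * p) N) \<longlonglongrightarrow> 1 - 2 * p"
    by (simp add: Lim_transform_eventually)
  then show ?thesis
    unfolding kappa_def[abs_def] by (rule tendsto_real_sqrt)
qed

lemma sum_vertex_field_sq:
  assumes "1 \<le> N"
  shows "(\<Sum>i\<in>{1..N}. (vertex_field p N z i)^2) = real N powr (1 - 2 * p) * z^2"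
proof -
  have "(\<Sum>i\<in>{1..N}. (vertex_field p N z i)^2) = (\<Sum>i\<in>{1..N}. kappa p N ^ 2 * z^2 * real i powr (- (2 * p)))"
    by (intro sum.cong) (auto simp: vertex_field_def power_mult_distrib powr_power)
  also have "\<dots> = kappa p N ^ 2 * zeta_partial (2 * p) N * z^2"
    by (simp add: zeta_partial_def sum_distrib_left mult_ac)
  finally show ?thesis using kappa_sq[OF assms] by simp
qed

lemma energy_split:
  "energy p r N z = - (\<Sum>i\<in>{1..N}. cosh_gap (vertex_field p N z i))
     + (\<Sum>i\<in>{1..N}. lncosh_remainder (vertex_field p N z i) (r / real N powr (1 - p)))
     + r / real N powr (1 - p) * (\<Sum>i\<in>{1..N}. tanh (vertex_field p N z i))"
  unfolding energy_def cosh_gap_def lncosh_remainder_def sum_distrib_left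
    sum_negf[symmetric] sum.distrib[symmetric]
  by (rule sum.cong) auto

lemma N_mult_shift_sq:
  assumes "1 \<le> N"
  shows "real N * (r / real N powr (1 - p))^2 = r^2 * real N powr (2 * p - 1)"
proof -
  have "real N powr (1 - (2 - 2 * p)) = real N powr 1 / real N powr (2 - 2 * p)"
    by (rule powr_diff)
  then show ?thesis
    using assms by (simp add: power_divide powr_power algebra_simps)
qed

lemma sum_lncosh_remainder_bounds:
  assumes "1 \<le> N"
  shows "0 \<le> (\<Sum>i\<in>{1..N}. lncosh_remainder (vertex_field p N z i) (r / real N powr (1 - p)))"
    and "(\<Sum>i\<in>{1..N}. lncosh_remainder (vertex_field p N z i) (r / real N powr (1 - p)))
           \<le> r^2 / 2 * real N powr (2 * p - 1)"
proof -
  show "0 \<le> (\<Sum>i\<in>{1..N}. lncosh_remainder (vertex_field p N z i) (r / real N powr (1 - p)))"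
    by (intro sum_nonneg lncosh_remainder_bounds)
  have "(\<Sum>i\<in>{1..N}. lncosh_remainder (vertex_field p N z i) (r / real N powr (1 - p)))
      \<le> (\<Sum>i\<in>{1..N}. (r / real N powr (1 - p))^2 / 2)"
    by (intro sum_mono lncosh_remainder_bounds)
  also have "\<dots> = r^2 / 2 * real N powr (2 * p - 1)"
    using N_mult_shift_sq[OF assms] by simp
  finally show "(\<Sum>i\<in>{1..N}. lncosh_remainder (vertex_field p N z i) (r / real N powr (1 - p)))
      \<le> r^2 / 2 * real N powr (2 * p - 1)" .
qed

lemma sum_tanh_vertex_field_approx:
  assumes "1 \<le> N"
  shows "\<bar>(\<Sum>i\<in>{1..N}. tanh (vertex_field p N z i)) - (\<Sum>i\<in>{1..N}. vertex_field p N z i)\<bar>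
           \<le> real N powr (1 - 2 * p) * z^2"
proof -
  have "\<bar>(\<Sum>i\<in>{1..N}. tanh (vertex_field p N z i)) - (\<Sum>i\<in>{1..N}. vertex_field p N z i)\<bar>
      \<le> (\<Sum>i\<in>{1..N}. \<bar>vertex_field p N z i - tanh (vertex_field p N z i)\<bar>)"
    unfolding sum_subtractf[symmetric] by (subst abs_minus_commute) (rule sum_abs)
  also have "\<dots> \<le> (\<Sum>i\<in>{1..N}. (vertex_field p N z i)^2)"
    by (intro sum_mono abs_self_minus_tanh_le)
  finally show ?thesis using sum_vertex_field_sq[OF assms] by simp
qed

lemma sum_vertex_field:
  "(\<Sum>i\<in>{1..N}. vertex_field p N z i) = kappa p N * z * zeta_partial p N"
  by (simp add: vertex_field_def zeta_partial_def sum_distrib_left)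

lemma sum_cosh_gap_vertex_field_tendsto:
  assumes p: "1/4 < p" "p < 1/2"
  shows "(\<lambda>N. \<Sum>i\<in>{1..N}. cosh_gap (vertex_field p N z i))
           \<longlonglongrightarrow> (\<Sum>k. cosh_gap (sqrt (1 - 2 * p) * z * real (Suc k) powr (- p)))"
proof -
  define A where "A k N = (if k < N then cosh_gap (kappa p N * z * real (Suc k) powr (- p)) else 0)" for k N
  define M where "M k = z^4 / 12 * real (Suc k) powr (- (4 * p))" for k
  have "(\<lambda>N. cosh_gap (kappa p N * z * real (Suc k) powr (- p)))
          \<longlonglongrightarrow> cosh_gap (sqrt (1 - 2 * p) * z * real (Suc k) powr (- p))" for k
    using p by (intro isCont_tendsto_compose[OF isCont_cosh_gap] tendsto_intros kappa_tendsto) auto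
  moreover have "\<forall>\<^sub>F N in sequentially. cosh_gap (kappa p N * z * real (Suc k) powr (- p)) = A k N" for k
    by (intro eventually_sequentiallyI[of "Suc k"]) (simp add: A_def)
  ultimately have lim: "(\<lambda>N. A k N) \<longlonglongrightarrow> cosh_gap (sqrt (1 - 2 * p) * z * real (Suc k) powr (- p))" for k
    by (rule Lim_transform_eventually)
  have bound: "norm (A k N) \<le> M k" for k N
  proof (cases "k < N")
    case True
    have "kappa p N * \<bar>z * real (Suc k) powr (- p)\<bar> \<le> \<bar>z * real (Suc k) powr (- p)\<bar>"
      using kappa_nonneg[of p N] kappa_bounds(2)[of p N] p True
      by (intro mult_left_le_one_le) auto
    then have "\<bar>kappa p N * z * real (Suc k) powr (- p)\<bar> \<le> \<bar>z * real (Suc k) powr (- p)\<bar>"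
      using kappa_nonneg[of p N] by (simp add: abs_mult mult.assoc)
    then have "cosh_gap (kappa p N * z * real (Suc k) powr (- p)) \<le> (z * real (Suc k) powr (- p))^4 / 12"
      using cosh_gap_mono cosh_gap_le_quartic order_trans by blast
    then show ?thesis
      using True cosh_gap_nonneg by (simp add: A_def M_def power_mult_distrib powr_power)
  qed (simp add: A_def M_def)
  have "summable (\<lambda>k. real (Suc k) powr (- (4 * p)))"
    using p summable_Suc_iff[of "\<lambda>n. real n powr (- (4 * p))"] by (simp add: summable_real_powr_iff)
  then have summable: "summable M"
    unfolding M_def by (rule summable_mult)
  have dominated: "\<forall>\<^sub>F (k, N) in sequentially \<times>\<^sub>F sequentially. norm (A k N) \<le> M k"
    using bound by (simp add: always_eventually split_def)
  have "(\<lambda>N. \<Sum>k. A k N) \<longlonglongrightarrow> (\<Sum>k. cosh_gap (sqrt (1 - 2 * p) * z * real (Suc k) powr (- p)))"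
    using tannerys_theorem[OF lim dominated summable sequentially_bot] by blast
  moreover have "(\<Sum>k. A k N) = (\<Sum>i\<in>{1..N}. cosh_gap (vertex_field p N z i))" for N
  proof -
    have "(\<Sum>k. A k N) = (\<Sum>k<N. cosh_gap (kappa p N * z * real (Suc k) powr (- p)))"
      by (subst suminf_finite[of "{..<N}"]) (auto simp: A_def)
    also have "\<dots> = (\<Sum>i\<in>{1..N}. cosh_gap (vertex_field p N z i))"
      by (simp add: vertex_field_def sum.atLeast1_atMost_eq)
    finally show ?thesis .
  qed
  ultimately show ?thesis by simp
qed

lemma sum_lncosh_remainder_tendsto_0:
  assumes "p < 1/2"
  shows "(\<lambda>N. \<Sum>i\<in>{1..N}. lncosh_remainder (vertex_field p N z i) (r / real N powr (1 - p)))
           \<longlonglongrightarrow> 0"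
proof (rule Lim_null_comparison)
  show "\<forall>\<^sub>F N in sequentially.
      norm (\<Sum>i\<in>{1..N}. lncosh_remainder (vertex_field p N z i) (r / real N powr (1 - p)))
        \<le> r^2 / 2 * real N powr (2 * p - 1)"
  proof (rule eventually_sequentiallyI)
    fix N :: nat
    assume "1 \<le> N"
    then show "norm (\<Sum>i\<in>{1..N}. lncosh_remainder (vertex_field p N z i) (r / real N powr (1 - p)))
        \<le> r^2 / 2 * real N powr (2 * p - 1)"
      using sum_lncosh_remainder_bounds[of N p z r] by simp
  qed
  show "(\<lambda>N. r^2 / 2 * real N powr (2 * p - 1)) \<longlonglongrightarrow> 0"
    using assms by (intro tendsto_mult_right_zero tendsto_neg_powr filterlim_real_sequentially) auto
qed

lemma sum_tanh_vertex_field_error_tendsto_0: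
  assumes "0 < p"
  shows "(\<lambda>N. r / real N powr (1 - p) * ((\<Sum>i\<in>{1..N}. tanh (vertex_field p N z i))
                                        - (\<Sum>i\<in>{1..N}. vertex_field p N z i))) \<longlonglongrightarrow> 0"
proof (rule Lim_null_comparison)
  show "\<forall>\<^sub>F N in sequentially.
      norm (r / real N powr (1 - p) * ((\<Sum>i\<in>{1..N}. tanh (vertex_field p N z i))
                                      - (\<Sum>i\<in>{1..N}. vertex_field p N z i)))
        \<le> \<bar>r\<bar> * z^2 * real N powr (- p)"
  proof (rule eventually_sequentiallyI)
    fix N :: nat
    assume N: "1 \<le> N"
    have "norm (r / real N powr (1 - p) * ((\<Sum>i\<in>{1..N}. tanh (vertex_field p N z i))
                                          - (\<Sum>i\<in>{1..N}. vertex_field p N z i)))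
        = \<bar>r\<bar> / real N powr (1 - p) * \<bar>(\<Sum>i\<in>{1..N}. tanh (vertex_field p N z i))
                                          - (\<Sum>i\<in>{1..N}. vertex_field p N z i)\<bar>"
      by (simp add: abs_mult)
    also have "\<dots> \<le> \<bar>r\<bar> / real N powr (1 - p) * (real N powr (1 - 2 * p) * z^2)"
      by (intro mult_left_mono sum_tanh_vertex_field_approx N) simp
    also have "\<dots> = \<bar>r\<bar> * z^2 * (real N powr (1 - 2 * p) / real N powr (1 - p))"
      by simp
    also have "real N powr (1 - 2 * p) / real N powr (1 - p) = real N powr (- p)"
      by (simp add: powr_diff[symmetric])
    finally show "norm (r / real N powr (1 - p) * ((\<Sum>i\<in>{1..N}. tanh (vertex_field p N z i))
                                          - (\<Sum>i\<in>{1..N}. vertex_field p N z i)))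
        \<le> \<bar>r\<bar> * z^2 * real N powr (- p)" .
  qed
  show "(\<lambda>N. \<bar>r\<bar> * z^2 * real N powr (- p)) \<longlonglongrightarrow> 0"
    using assms by (intro tendsto_mult_right_zero tendsto_neg_powr filterlim_real_sequentially) auto
qed

lemma shifted_sum_vertex_field_tendsto:
  assumes "0 < p" "p < 1/2"
  shows "(\<lambda>N. r / real N powr (1 - p) * (\<Sum>i\<in>{1..N}. vertex_field p N z i))
           \<longlonglongrightarrow> r * z * sqrt (1 - 2 * p) / (1 - p)"
proof -
  have "(\<lambda>N. r * z * kappa p N * (real N powr (p - 1) * zeta_partial p N))
      \<longlonglongrightarrow> r * z * sqrt (1 - 2 * p) * (1 / (1 - p))"
    using assms by (intro tendsto_intros kappa_tendsto zeta_partial_asymp) auto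
  moreover have "\<forall>\<^sub>F N in sequentially. r * z * kappa p N * (real N powr (p - 1) * zeta_partial p N)
      = r / real N powr (1 - p) * (\<Sum>i\<in>{1..N}. vertex_field p N z i)"
    unfolding sum_vertex_field
    by (intro eventually_sequentiallyI[of 1]) (simp add: divide_inverse powr_minus[symmetric])
  ultimately show ?thesis
    by (simp add: Lim_transform_eventually)
qed

lemma energy_tendsto:
  assumes p: "1/4 < p" "p < 1/2"
  shows "(\<lambda>N. energy p r N z) \<longlonglongrightarrow> energy_lim p r z"
proof -
  define s where "s N = r / real N powr (1 - p)" for N
  have "(\<lambda>N. - (\<Sum>i\<in>{1..N}. cosh_gap (vertex_field p N z i))
          + (\<Sum>i\<in>{1..N}. lncosh_remainder (vertex_field p N z i) (s N))
          + s N * ((\<Sum>i\<in>{1..N}. tanh (vertex_field p N z i)) - (\<Sum>i\<in>{1..N}. vertex_field p N z i))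
          + s N * (\<Sum>i\<in>{1..N}. vertex_field p N z i))
      \<longlonglongrightarrow> - (\<Sum>k. cosh_gap (sqrt (1 - 2 * p) * z * real (Suc k) powr (- p))) + 0 + 0
          + r * z * sqrt (1 - 2 * p) / (1 - p)"
    unfolding s_def using p
    by (intro tendsto_intros sum_cosh_gap_vertex_field_tendsto sum_lncosh_remainder_tendsto_0
        sum_tanh_vertex_field_error_tendsto_0 shifted_sum_vertex_field_tendsto) auto
  then show ?thesis
    by (simp add: energy_split energy_lim_def s_def algebra_simps)
qed

lemma energy_le:
  assumes p: "0 < p" "p < 1/2" and N: "1 \<le> N"
  shows "energy p r N z \<le> - cosh_gap (sqrt (1 - 2 * p) * z) + r^2 / 2 + \<bar>r\<bar> * \<bar>z\<bar> / (1 - p)"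
proof -
  define s where "s = r / real N powr (1 - p)"
  have kappa: "sqrt (1 - 2 * p) \<le> kappa p N" "0 \<le> kappa p N" "kappa p N \<le> 1"
    using kappa_bounds[OF p N] kappa_nonneg by auto
  have "\<bar>sqrt (1 - 2 * p) * z\<bar> \<le> \<bar>vertex_field p N z 1\<bar>"
    using kappa p by (simp add: vertex_field_def abs_mult mult_right_mono)
  then have "cosh_gap (sqrt (1 - 2 * p) * z) \<le> cosh_gap (vertex_field p N z 1)"
    by (rule cosh_gap_mono)
  also have "\<dots> \<le> (\<Sum>i\<in>{1..N}. cosh_gap (vertex_field p N z i))"
    using N cosh_gap_nonneg by (intro member_le_sum) auto
  finally have gap: "cosh_gap (sqrt (1 - 2 * p) * z) \<le> (\<Sum>i\<in>{1..N}. cosh_gap (vertex_field p N z i))" .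
  have "real N powr (2 * p - 1) \<le> real N powr 0"
    using N p by (intro powr_mono) auto
  then have "r^2 / 2 * real N powr (2 * p - 1) \<le> r^2 / 2"
    using N by (intro mult_left_le) auto
  then have rem: "(\<Sum>i\<in>{1..N}. lncosh_remainder (vertex_field p N z i) s) \<le> r^2 / 2"
    using sum_lncosh_remainder_bounds(2)[OF N, of p z r] by (simp add: s_def)
  have "s * (\<Sum>i\<in>{1..N}. tanh (vertex_field p N z i)) \<le> \<bar>s\<bar> * (\<Sum>i\<in>{1..N}. \<bar>vertex_field p N z i\<bar>)"
  proof -
    have "\<bar>\<Sum>i\<in>{1..N}. tanh (vertex_field p N z i)\<bar> \<le> (\<Sum>i\<in>{1..N}. \<bar>vertex_field p N z i\<bar>)"
      by (rule order_trans[OF sum_abs sum_mono[OF abs_tanh_le_abs]])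
    then have "\<bar>s\<bar> * \<bar>\<Sum>i\<in>{1..N}. tanh (vertex_field p N z i)\<bar> \<le> \<bar>s\<bar> * (\<Sum>i\<in>{1..N}. \<bar>vertex_field p N z i\<bar>)"
      by (rule mult_left_mono) simp
    moreover have "s * (\<Sum>i\<in>{1..N}. tanh (vertex_field p N z i)) \<le> \<bar>s\<bar> * \<bar>\<Sum>i\<in>{1..N}. tanh (vertex_field p N z i)\<bar>"
      by (simp add: abs_mult[symmetric])
    ultimately show ?thesis by linarith
  qed
  also have "\<dots> = \<bar>r\<bar> / real N powr (1 - p) * \<bar>z\<bar> * (kappa p N * zeta_partial p N)"
    using kappa by (simp add: s_def vertex_field_def zeta_partial_def abs_mult sum_distrib_left mult_ac)
  also have "\<dots> \<le> \<bar>r\<bar> / real N powr (1 - p) * \<bar>z\<bar> * (1 * (real N powr (1 - p) / (1 - p)))"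
    using kappa zeta_partial_le[of p N] zeta_partial_pos[OF N, of p] p
    by (intro mult_left_mono mult_mono) auto
  also have "\<dots> = \<bar>r\<bar> * \<bar>z\<bar> / (1 - p)"
    using N by simp
  finally have tanh: "s * (\<Sum>i\<in>{1..N}. tanh (vertex_field p N z i)) \<le> \<bar>r\<bar> * \<bar>z\<bar> / (1 - p)" .
  show ?thesis
    using gap rem tanh by (simp add: energy_split s_def)
qed

lemma integrable_exp_minus_sq:
  fixes a :: real
  assumes "0 < a"
  shows "integrable lborel (\<lambda>z. exp (- a * z^2))"
proof -
  have "sqrt (2 * a) \<noteq> 0" using assms by simp
  then have "integrable lborel (\<lambda>z. std_normal_density (0 + sqrt (2 * a) * z))"
    by (intro lborel_integrable_real_affine integrable_normal_density) auto
  moreover have "exp (- a * z^2) = sqrt (2 * pi) * std_normal_density (0 + sqrt (2 * a) * z)" for z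
    using assms by (simp add: std_normal_density_def power_mult_distrib)
  ultimately show ?thesis
    by (simp only:) (rule integrable_mult_right)
qed

lemma integral_exp_energy_tendsto:
  assumes p: "1/4 < p" "p < 1/2"
  shows "(\<lambda>N. integral\<^sup>L lborel (\<lambda>z. exp (energy p r N z)))
           \<longlonglongrightarrow> integral\<^sup>L lborel (\<lambda>z. exp (energy_lim p r z))"
proof -
  define k where "k = sqrt (1 - 2 * p)"
  define D where "D = k + \<bar>r\<bar> / (1 - p)"
  define w where "w z = exp (D^2 / k^2 + r^2 / 2) * exp (- (k^2 / 4) * z^2)" for z
  have k: "0 < k" using p by (simp add: k_def)
  have lim: "(\<lambda>n. exp (energy p r (Suc n) z)) \<longlonglongrightarrow> exp (energy_lim p r z)" for z
    by (intro tendsto_exp LIMSEQ_Suc energy_tendsto p)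
  have "continuous_on UNIV (\<lambda>z. exp (energy p r N z))" for N
    unfolding energy_def vertex_field_def by (intro continuous_intros) auto
  then have meas: "(\<lambda>z. exp (energy p r N z)) \<in> borel_measurable lborel" for N
    by (simp add: borel_measurable_continuous_onI)
  have "exp (energy p r (Suc n) z) \<le> w z" for n z
  proof -
    have "energy p r (Suc n) z \<le> - cosh_gap (k * z) + r^2 / 2 + \<bar>r\<bar> * \<bar>z\<bar> / (1 - p)"
      using energy_le[of p "Suc n"] p by (simp add: k_def)
    also have "\<dots> \<le> - (k^2 / 2) * z^2 + D * \<bar>z\<bar> + r^2 / 2"
      using cosh_gap_ge[of "k * z"] k p by (simp add: D_def abs_mult power_mult_distrib algebra_simps)
    also have "\<dots> \<le> - (k^2 / 4) * z^2 + D^2 / k^2 + r^2 / 2"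
    proof -
      \<comment> \<open>completing the square: \<open>D \<bar>z\<bar> \<le> k\<^sup>2 z\<^sup>2 / 4 + D\<^sup>2 / k\<^sup>2\<close>\<close>
      have "0 \<le> (k * \<bar>z\<bar> / 2 - D / k)^2" by simp
      then show ?thesis
        using k by (simp add: power2_eq_square field_simps)
    qed
    finally show ?thesis
      by (simp add: w_def exp_add[symmetric] algebra_simps)
  qed
  moreover have "integrable lborel w"
    unfolding w_def using k by (intro integrable_mult_right integrable_exp_minus_sq) simp
  ultimately have "(\<lambda>n. integral\<^sup>L lborel (\<lambda>z. exp (energy p r (Suc n) z)))
      \<longlonglongrightarrow> integral\<^sup>L lborel (\<lambda>z. exp (energy_lim p r z))"
    using lim meas by (intro integral_dominated_convergence[OF borel_measurable_LIMSEQ_real[OF lim meas]])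
      auto
  then show ?thesis
    by (rule filterlim_sequentially_Suc[THEN iffD1])
qed

lemma wt_eq: "wt tau cw N i = cw * real N powr (1 / (tau - 1)) * real i powr (- (1 / (tau - 1)))"
  by (simp add: wt_def powr_divide powr_minus_divide)

lemma EW2N_eq:
  "EW2N tau cw N = cw^2 * real N powr (2 / (tau - 1)) * zeta_partial (2 / (tau - 1)) N / real N"
proof -
  have "(wt tau cw N i)^2 = cw^2 * real N powr (2 / (tau - 1)) * real i powr (- (2 / (tau - 1)))"
    if "i \<in> {1..N}" for i
    using that by (simp add: wt_eq power_mult_distrib powr_power)
  then show ?thesis
    by (simp add: EW2N_def zeta_partial_def sum_distrib_left)
qed

lemma alphaN_betacN:
  "EWN tau cw N \<noteq> 0 \<Longrightarrow> alphaN tau cw N (betacN tau cw N) = sqrt (1 / EW2N tau cw N)"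
  by (simp add: alphaN_def betacN_def nuN_def)

lemma minus_N_GN_eq_energy:
  assumes tau: "1 < tau" and cw: "0 < cw"
  shows "- real N * GN tau cw N (betacN tau cw N) ((tau - 2) / (tau - 1)) (z / real N powr (1 / (tau - 1))) r
           = energy (1 / (tau - 1)) r N z"
proof (cases "N = 0")
  case True
  then show ?thesis by (simp add: energy_def)
next
  case False
  define p where "p = 1 / (tau - 1)"
  have N: "1 \<le> N" "0 < real N" using False by auto
  have lambda: "(tau - 2) / (tau - 1) = 1 - p"
    using tau by (simp add: p_def field_simps)
  have "0 < EWN tau cw N"
    unfolding EWN_def using N cw by (intro divide_pos_pos sum_pos) (auto simp: wt_def)
  then have "alphaN tau cw N (betacN tau cw N) * cw = kappa p N"
    using N cw zeta_partial_pos[OF N(1), of "2 * p"]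
    by (simp add: alphaN_betacN EW2N_eq kappa_def p_def real_sqrt_divide powr_diff real_sqrt_mult)
  then have field: "alphaN tau cw N (betacN tau cw N) * wt tau cw N i * (z / real N powr p)
      = vertex_field p N z i" for i
    using N by (simp add: wt_eq vertex_field_def p_def)
  have "real N * (z / real N powr p)^2 = real N powr (1 - 2 * p) * z^2"
    using N by (simp add: power_divide powr_power powr_diff)
  then have quadratic: "real N * ((z / real N powr p)^2 / 2) = (\<Sum>i\<in>{1..N}. (vertex_field p N z i)^2 / 2)"
    using sum_vertex_field_sq[OF N(1)] by (simp add: sum_divide_distrib[symmetric])
  have "GN tau cw N (betacN tau cw N) ((tau - 2) / (tau - 1)) (z / real N powr (1 / (tau - 1))) r
      = (z / real N powr p)^2 / 2
        - (\<Sum>i\<in>{1..N}. ln (cosh (vertex_field p N z i + r / real N powr (1 - p)))) / real N"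
    unfolding GN_def lambda p_def[symmetric] field ..
  then show ?thesis
    using N quadratic by (simp add: energy_def sum_subtractf right_diff_distrib p_def[symmetric])
qed

lemma EW_div_nu:
  assumes "3 < tau" "0 < cw"
  shows "EW tau cw / nu tau cw = (1 - 2 / (tau - 1)) / (1 - 1 / (tau - 1))^2"
proof -
  define A where "A = tau - 1"
  have A: "A \<noteq> 0" "A - 1 \<noteq> 0" "A - 2 \<noteq> 0" using assms by (auto simp: A_def)
  have "EW tau cw = cw * A / (A - 1)" "EW2 tau cw = cw^2 * A / (A - 2)"
    by (simp_all add: EW_def EW2_def A_def algebra_simps)
  moreover have "1 - 2 / A = (A - 2) / A" "1 - 1 / A = (A - 1) / A"
    using A by (simp_all add: field_simps)
  ultimately show ?thesis
    using A assms by (simp add: nu_def A_def[symmetric] power2_eq_square)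
qed

lemma sqrt_EW_div_nu:
  assumes "3 < tau" "0 < cw"
  shows "sqrt (EW tau cw / nu tau cw) = sqrt (1 - 2 / (tau - 1)) / (1 - 1 / (tau - 1))"
proof -
  have "0 < 1 - 1 / (tau - 1)"
    using assms by (simp add: field_simps)
  then show ?thesis
    using EW_div_nu[OF assms] by (simp add: real_sqrt_divide)
qed

lemma energy_lim_eq_flim:
  assumes "3 < tau" "0 < cw"
  shows "z * r * sqrt (EW tau cw / nu tau cw) - flim tau (sqrt (EW tau cw / nu tau cw) * z)
           = energy_lim (1 / (tau - 1)) r z"
proof -
  have "(tau - 2) / (tau - 1) = 1 - 1 / (tau - 1)"
    using assms by (simp add: field_simps)
  then have "(tau - 2) / (tau - 1) * (sqrt (EW tau cw / nu tau cw) * z) * real (Suc k) powr (- 1 / (tau - 1))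
      = sqrt (1 - 2 * (1 / (tau - 1))) * z * real (Suc k) powr (- (1 / (tau - 1)))" for k
    using assms by (simp add: sqrt_EW_div_nu)
  then have "flim tau (sqrt (EW tau cw / nu tau cw) * z)
      = (\<Sum>k. cosh_gap (sqrt (1 - 2 * (1 / (tau - 1))) * z * real (Suc k) powr (- (1 / (tau - 1)))))"
    by (simp add: flim_def cosh_gap_def Let_def)
  then show ?thesis
    using assms by (simp add: energy_lim_def sqrt_EW_div_nu)
qed

theorem mainTheorem13:
  fixes tau cw r :: real
  assumes "3 < tau" "tau < 5" "0 < cw"
  shows "(\<lambda>N. integral\<^sup>L lborel
            (\<lambda>z. exp (- real N * GN tau cw N (betacN tau cw N) ((tau - 2) / (tau - 1))
                                     (z / real N powr (1 / (tau - 1))) r)))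
         \<longlonglongrightarrow> integral\<^sup>L lborel
            (\<lambda>z. exp (z * r * sqrt (EW tau cw / nu tau cw)
                      - flim tau (sqrt (EW tau cw / nu tau cw) * z)))"
proof -
  have "1/4 < 1 / (tau - 1)" "1 / (tau - 1) < 1/2" "1 < tau"
    using assms by (simp_all add: field_simps)
  then show ?thesis
    unfolding minus_N_GN_eq_energy[OF \<open>1 < tau\<close> \<open>0 < cw\<close>]
      energy_lim_eq_flim[OF \<open>3 < tau\<close> \<open>0 < cw\<close>]
    by (intro integral_exp_energy_tendsto)
qed

end
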